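(* Let $\alpha\in(1,2)$ and let $p\ge2$ be an integer (so $p>\alpha$). Then $f^{p,\alpha}(\theta)=f^{p,\alpha}(-\theta)$ for all $\theta$, and there is a constant $C_{p,\alpha}$ depending only on $p$ and $\alpha$ such that for all $\theta\in[0,\pi]$ $$|\theta|^\alpha\left(\frac{\sin(\theta/2)}{\theta/2}\right)^{p+1}\le f^{p,\alpha}(\theta)\le |\theta|^\alpha\left(\frac{\sin(\theta/2)}{\theta/2}\right)^{p+1}+C_{p,\alpha}\left(\sin(\theta/2)\right)^{p+1}.$$ Moreover, $$\frac{f^{p,\alpha}(\pi)}{\max_\theta f^{p,\alpha}(\theta)}\le\frac{f^{p,\alpha}(\pi)}{f^{p,\alpha}(\pi/2)}\le 2^{\frac{2\alpha+1-p}{2}}.$$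
   Context: For real $\alpha$ and integer $p\ge 2$, $f^{p,\alpha}(\theta)=\sum_{l\in\mathbb Z}|\theta+2l\pi|^{\alpha}\left(\frac{\sin(\theta/2+l\pi)}{\theta/2+l\pi}\right)^{p+1}$ (with the value at $\theta/2+l\pi=0$ of $\frac{\sin x}{x}$ taken as $1$). *)

theory Defs
  imports "HOL-Analysis.Analysis"
begin

definition sinc_fn :: "real \<Rightarrow> real" where
  "sinc_fn x = (if x = 0 then 1 else sin x / x)"

text \<open>f^{p,alpha}(theta) = sum over l in Z of |theta + 2 l pi|^alpha * sinc(theta/2 + l pi)^(p+1).
  The series converges absolutely for p + 1 - alpha > 1; we use the unconditional sum infsum.\<close>
definition f_pa :: "nat \<Rightarrow> real \<Rightarrow> real \<Rightarrow> real" where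
  "f_pa p \<alpha> \<theta> = (\<Sum>\<^sub>\<infinity>l\<in>(UNIV::int set).
      \<bar>\<theta> + 2 * of_int l * pi\<bar> powr \<alpha> * (sinc_fn (\<theta> / 2 + of_int l * pi)) ^ (p + 1))"

end

theory Submission
  imports Defs
begin

(*
  Writing y = theta + 2 l pi, the l-th summand equals (2 sin(y/2) sgn y)^(p+1) |y|^(alpha-p-1), and
  sin(y/2) = +- sin(theta/2). So for theta in [0, pi] the summand with index l /= 0 is bounded by
  (2 sin(theta/2))^(p+1) |l|^(alpha-p-1), which is summable since alpha < p: this gives absolute
  convergence and the upper bound with C = 2^(p+2) zeta(p+1-alpha). For the lower bound the summands
  with l /= 0 are nonnegative when p is odd; when p is even those at l = n+1 and l = -n-1 combine into
  an alternating series with decreasing terms, whose sum is nonnegative.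

  At theta = pi and theta = pi/2 the sum becomes an explicit signed series over the odd integers.
  Grouping both series along the residues modulo 8 shows that the one for pi is at most the one for
  pi/2, and the powers of 2 in front give the ratio bound. The supremum is finite, and so at least
  f(pi/2), because f is even and 2 pi-periodic and hence bounded by its bound on [0, pi].
*)

lemma infsum_int_split:
  fixes g :: "int \<Rightarrow> 'a::banach"
  assumes nonneg: "summable (\<lambda>n. norm (g (int n)))"
    and neg: "summable (\<lambda>n. norm (g (- int n - 1)))"
  shows "infsum g UNIV = (\<Sum>n. g (int n)) + (\<Sum>n. g (- int n - 1))"
proof -
  have "((g \<circ> int) has_sum (\<Sum>n. g (int n))) UNIV"
    using norm_summable_imp_has_sum[OF nonneg summable_sums[OF summable_norm_cancel[OF nonneg]]]
    by (simp add: o_def)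
  then have on_nonneg: "(g has_sum (\<Sum>n. g (int n))) (range int)"
    by (subst has_sum_reindex) auto
  have "((g \<circ> (\<lambda>n. - int n - 1)) has_sum (\<Sum>n. g (- int n - 1))) UNIV"
    using norm_summable_imp_has_sum[OF neg summable_sums[OF summable_norm_cancel[OF neg]]]
    by (simp add: o_def)
  then have on_neg: "(g has_sum (\<Sum>n. g (- int n - 1))) (range (\<lambda>n::nat. - int n - 1))"
    by (subst has_sum_reindex) (auto simp: inj_on_def)
  have "x \<in> range int \<union> range (\<lambda>n::nat. - int n - 1)" for x :: int
  proof (cases "0 \<le> x")
    case True
    then have "x = int (nat x)" by simp
    then show ?thesis by blast
  next
    case False
    then have "x = - int (nat (- x - 1)) - 1" by simp
    then show ?thesis by blast
  qed
  then have "range int \<union> range (\<lambda>n::nat. - int n - 1) = UNIV" by blast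
  moreover have "range int \<inter> range (\<lambda>n::nat. - int n - 1) = {}" by auto
  ultimately have "(g has_sum (\<Sum>n. g (int n)) + (\<Sum>n. g (- int n - 1))) UNIV"
    using has_sum_Un_disjoint[OF on_nonneg on_neg] by simp
  then show ?thesis by (rule infsumI)
qed

lemma sum_group2_eq:
  fixes f :: "nat \<Rightarrow> 'a::comm_monoid_add"
  shows "(\<Sum>n\<in>{i*2..<i*2+2}. f n) = f (2*i) + f (2*i+1)"
  by (simp add: eval_nat_numeral mult.commute)

lemma sum_group4_eq:
  fixes f :: "nat \<Rightarrow> 'a::comm_monoid_add"
  shows "(\<Sum>n\<in>{i*4..<i*4+4}. f n) = f (4*i) + f (4*i+1) + f (4*i+2) + f (4*i+3)"
  by (simp add: eval_nat_numeral mult.commute add.assoc)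

lemma alternating_suminf_nonneg:
  fixes a :: "nat \<Rightarrow> real"
  assumes "summable (\<lambda>n. (-1)^n * a n)" and "\<And>n. a (Suc n) \<le> a n"
  shows "0 \<le> (\<Sum>n. (-1)^n * a n)"
proof -
  have "(\<lambda>i. \<Sum>n\<in>{i*2..<i*2+2}. (-1)^n * a n) sums (\<Sum>n. (-1)^n * a n)"
    using sums_group[OF summable_sums[OF assms(1)], of 2] by simp
  moreover have "(\<Sum>n\<in>{i*2..<i*2+2}. (-1)^n * a n) = a (2*i) - a (2*i+1)" for i
    unfolding sum_group2_eq by simp
  ultimately have pairs: "(\<lambda>i. a (2*i) - a (2*i+1)) sums (\<Sum>n. (-1)^n * a n)"
    by simp
  show ?thesis
    by (rule sums_le[OF _ sums_zero pairs]) (use assms(2) in simp)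
qed

lemma summable_power_mult_reindex:
  fixes u :: "nat \<Rightarrow> real"
  assumes "summable u" and "\<And>m. 0 < m \<Longrightarrow> 0 \<le> u m"
    and "\<And>m m'. 0 < m \<Longrightarrow> m \<le> m' \<Longrightarrow> u m' \<le> u m"
    and "\<bar>\<sigma>\<bar> \<le> 1" and "1 \<le> c" and "1 \<le> d"
  shows "summable (\<lambda>n. \<sigma>^n * u (c*n + d))"
proof (rule summable_comparison_test[OF _ assms(1)])
  have "norm (\<sigma>^n * u (c*n + d)) \<le> u n" if "1 \<le> n" for n
  proof -
    have "norm (\<sigma>^n * u (c*n + d)) = \<bar>\<sigma>\<bar>^n * u (c*n + d)"
      using assms(2,6) by (simp add: abs_mult power_abs)
    also have "\<dots> \<le> u (c*n + d)"
      using assms(2,4,6) by (intro mult_left_le_one_le power_le_one) auto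
    also have "\<dots> \<le> u n"
      using that mult_le_mono1[OF assms(5), of n] by (intro assms(3)) (simp_all add: trans_le_add1)
    finally show ?thesis .
  qed
  then show "\<exists>N. \<forall>n\<ge>N. norm (\<sigma>^n * u (c*n + d)) \<le> u n" by blast
qed

lemma signed_odd_series_le:
  fixes u :: "nat \<Rightarrow> real"
  assumes \<sigma>: "\<sigma> = 1 \<or> \<sigma> = -1" and "summable u" and pos: "\<And>m. 0 < m \<Longrightarrow> 0 < u m"
    and dec: "\<And>m m'. 0 < m \<Longrightarrow> m < m' \<Longrightarrow> u m' < u m"
  shows "0 < (\<Sum>n. \<sigma>^n * u (2*n + 1))"
    and "(\<Sum>n. \<sigma>^n * u (2*n + 1)) \<le> (\<Sum>n. \<sigma>^n * (u (4*n + 1) + u (4*n + 3)))"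
proof -
  have dec_le: "u m' \<le> u m" if "0 < m" "m \<le> m'" for m m'
    using dec[of m m'] that by (cases "m = m'") auto
  have summable_sub: "summable (\<lambda>n. \<sigma>^n * u (c*n + d))" if "1 \<le> c" "1 \<le> d" for c d
    using that \<sigma> by (intro summable_power_mult_reindex) (auto simp: assms(2,3) dec_le less_imp_le)
  \<comment> \<open>Blocks over the odd numbers in \<open>[8i, 8i + 8)\<close>; they differ by \<open>(1 - \<sigma>) (u (8i+3) - u (8i+5))\<close>.\<close>
  define block1 where "block1 i = u (8*i+1) + \<sigma> * u (8*i+3) + u (8*i+5) + \<sigma> * u (8*i+7)" for i
  define block2 where "block2 i = u (8*i+1) + u (8*i+3) + \<sigma> * (u (8*i+5) + u (8*i+7))" for i
  have "(\<lambda>i. \<Sum>n\<in>{i*4..<i*4+4}. \<sigma>^n * u (2*n + 1)) sums (\<Sum>n. \<sigma>^n * u (2*n + 1))"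
    using sums_group[OF summable_sums[OF summable_sub[of 2 1]], of 4] by simp
  moreover have "(\<Sum>n\<in>{i*4..<i*4+4}. \<sigma>^n * u (2*n + 1)) = block1 i" for i
  proof -
    have pw: "\<sigma>^(4*i) = 1" "\<sigma>^(4*i+1) = \<sigma>" "\<sigma>^(4*i+2) = 1" "\<sigma>^(4*i+3) = \<sigma>"
      using \<sigma> by (auto simp: power_add power_mult)
    have idx: "2*(4*i)+1 = 8*i+1" "2*(4*i+1)+1 = 8*i+3" "2*(4*i+2)+1 = 8*i+5" "2*(4*i+3)+1 = 8*i+7"
      by simp_all
    show ?thesis
      unfolding sum_group4_eq block1_def pw idx by simp
  qed
  ultimately have sums_block1: "block1 sums (\<Sum>n. \<sigma>^n * u (2*n + 1))" by simp
  have "(\<lambda>i. \<Sum>n\<in>{i*2..<i*2+2}. \<sigma>^n * (u (4*n + 1) + u (4*n + 3)))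
      sums (\<Sum>n. \<sigma>^n * (u (4*n + 1) + u (4*n + 3)))"
    using sums_group[OF summable_sums[OF summable_add[OF summable_sub[of 4 1] summable_sub[of 4 3]]], of 2]
    by (simp add: distrib_left)
  moreover have "(\<Sum>n\<in>{i*2..<i*2+2}. \<sigma>^n * (u (4*n + 1) + u (4*n + 3))) = block2 i" for i
  proof -
    have pw: "\<sigma>^(2*i) = 1" "\<sigma>^(2*i+1) = \<sigma>"
      using \<sigma> by (auto simp: power_add power_mult)
    have idx: "4*(2*i)+1 = 8*i+1" "4*(2*i)+3 = 8*i+3" "4*(2*i+1)+1 = 8*i+5" "4*(2*i+1)+3 = 8*i+7"
      by simp_all
    show ?thesis
      unfolding sum_group2_eq block2_def pw idx by simp
  qed
  ultimately have sums_block2: "block2 sums (\<Sum>n. \<sigma>^n * (u (4*n + 1) + u (4*n + 3)))" by simp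
  have "block1 i \<le> block2 i" for i
    using \<sigma> dec[of "8*i+3" "8*i+5"] by (auto simp: block1_def block2_def)
  then show "(\<Sum>n. \<sigma>^n * u (2*n + 1)) \<le> (\<Sum>n. \<sigma>^n * (u (4*n + 1) + u (4*n + 3)))"
    using sums_le[OF _ sums_block1 sums_block2] by blast
  have "0 < block1 i" for i
    using \<sigma> dec[of "8*i+1" "8*i+3"] dec[of "8*i+5" "8*i+7"] pos[of "8*i+3"] pos[of "8*i+7"]
      pos[of "8*i+1"] pos[of "8*i+5"]
    by (auto simp: block1_def)
  then show "0 < (\<Sum>n. \<sigma>^n * u (2*n + 1))"
    using suminf_pos[OF sums_summable[OF sums_block1]] sums_unique[OF sums_block1] by simp
qed

lemma power_neg_one_power_mult:
  fixes x :: "'a::comm_ring_1"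
  shows "((-1)^n * x)^k = ((-1)^k)^n * x^k"
  by (simp add: power_mult_distrib power_mult[symmetric] mult.commute)

lemma powr_diff_antimono:
  fixes b \<theta> x x' :: real
  assumes "b \<le> 0" "0 \<le> \<theta>" "\<theta> < x" "x \<le> x'"
  shows "(x' - \<theta>) powr b - (x' + \<theta>) powr b \<le> (x - \<theta>) powr b - (x + \<theta>) powr b"
proof (rule DERIV_nonpos_imp_nonincreasing[where f = "\<lambda>z. (z - \<theta>) powr b - (z + \<theta>) powr b"])
  show "x \<le> x'" by fact
  fix z assume "x \<le> z" "z \<le> x'"
  then have z: "0 < z - \<theta>" "0 < z + \<theta>" using assms by auto
  have "(z + \<theta>) powr (b - 1) \<le> (z - \<theta>) powr (b - 1)"
    using z assms by (intro powr_mono2') auto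
  then have "b * (z - \<theta>) powr (b - 1) - b * (z + \<theta>) powr (b - 1) \<le> 0"
    using assms(1) by (simp add: right_diff_distrib[symmetric] mult_nonpos_nonneg)
  moreover have "((\<lambda>z. (z - \<theta>) powr b - (z + \<theta>) powr b) has_real_derivative
      b * (z - \<theta>) powr (b - 1) - b * (z + \<theta>) powr (b - 1)) (at z)"
    using z by (auto intro!: derivative_eq_intros)
  ultimately show "\<exists>D. ((\<lambda>z. (z - \<theta>) powr b - (z + \<theta>) powr b) has_real_derivative D) (at z) \<and> D \<le> 0"
    by blast
qed

lemma abs_powr_mult_divide_power:
  fixes y c a :: real
  assumes "y \<noteq> 0"
  shows "\<bar>y\<bar> powr a * (c / y)^k = (c * sgn y)^k * \<bar>y\<bar> powr (a - real k)"
proof -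
  have "c / y = c * sgn y / \<bar>y\<bar>"
    using assms by (cases "y > 0") (auto simp: field_simps)
  then have "(c / y)^k = (c * sgn y)^k / \<bar>y\<bar> powr real k"
    using assms by (simp add: power_divide powr_realpow)
  then show ?thesis
    using assms by (simp add: powr_diff field_simps)
qed

lemma real_Suc_le_2_Suc_pi_minus:
  assumes "0 \<le> \<theta>" "\<theta> \<le> pi"
  shows "real (Suc n) \<le> 2 * real (Suc n) * pi - \<theta>"
proof -
  define N where "N = real (Suc n)"
  have "N * 1 \<le> N * pi" "1 * pi \<le> N * pi"
    unfolding N_def using pi_gt3 by (intro mult_left_mono mult_right_mono; simp)+
  then show ?thesis
    using assms unfolding N_def[symmetric] by linarith
qed

lemma two_power_pi_powr_eq:
  "2^(p + 2) * pi powr (\<alpha> - real (p + 1))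
     = 2 powr ((2 * \<alpha> + 1 - real p) / 2) * (sqrt 2^(p + 1) * (pi / 2) powr (\<alpha> - real (p + 1)))"
proof -
  define e where "e = (2 * \<alpha> + 1 - real p) / 2"
  define \<beta> where "\<beta> = \<alpha> - real (p + 1)"
  have "sqrt 2^(p + 1) = ((2::real) powr (1/2))^(p + 1)"
    by (simp add: powr_half_sqrt)
  also have "\<dots> = 2 powr (real (p + 1) / 2)"
    by (subst powr_power) simp_all
  finally have "2 powr e * (sqrt 2^(p + 1) * (pi / 2) powr \<beta>)
      = pi powr \<beta> * 2 powr (e + real (p + 1) / 2 - \<beta>)"
    by (simp add: powr_divide powr_add powr_diff)
  also have "e + real (p + 1) / 2 - \<beta> = real (p + 2)"
    unfolding e_def \<beta>_def by (simp add: field_simps)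
  also have "(2::real) powr real (p + 2) = 2^(p + 2)"
    by (rule powr_realpow) simp
  finally show ?thesis
    unfolding e_def \<beta>_def by (simp add: mult.commute)
qed

lemma sinc_fn_minus: "sinc_fn (- x) = sinc_fn x"
  unfolding sinc_fn_def by auto

lemma abs_sinc_fn_le_1: "\<bar>sinc_fn x\<bar> \<le> 1"
  unfolding sinc_fn_def using abs_sin_x_le_abs_x[of x]
  by (auto simp: abs_divide divide_le_eq_1)

definition f_pa_summand :: "nat \<Rightarrow> real \<Rightarrow> real \<Rightarrow> int \<Rightarrow> real" where
  "f_pa_summand p \<alpha> \<theta> l =
     \<bar>\<theta> + 2 * of_int l * pi\<bar> powr \<alpha> * sinc_fn (\<theta> / 2 + of_int l * pi) ^ (p + 1)"

lemma f_pa_eq_infsum_summand: "f_pa p \<alpha> \<theta> = infsum (f_pa_summand p \<alpha> \<theta>) UNIV"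
  unfolding f_pa_def f_pa_summand_def ..

lemma f_pa_minus: "f_pa p \<alpha> (- \<theta>) = f_pa p \<alpha> \<theta>"
proof -
  have "f_pa_summand p \<alpha> (- \<theta>) = f_pa_summand p \<alpha> \<theta> \<circ> uminus"
  proof
    fix l :: int
    have "- \<theta> / 2 + of_int l * pi = - (\<theta> / 2 + of_int (- l) * pi)"
      and "\<bar>- \<theta> + 2 * of_int l * pi\<bar> = \<bar>\<theta> + 2 * of_int (- l) * pi\<bar>" by simp_all
    then show "f_pa_summand p \<alpha> (- \<theta>) l = (f_pa_summand p \<alpha> \<theta> \<circ> uminus) l"
      unfolding f_pa_summand_def o_def by (simp only: sinc_fn_minus)
  qed
  then have "f_pa p \<alpha> (- \<theta>) = infsum (f_pa_summand p \<alpha> \<theta> \<circ> uminus) UNIV"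
    by (simp only: f_pa_eq_infsum_summand)
  also have "\<dots> = infsum (f_pa_summand p \<alpha> \<theta>) (range uminus)"
    by (rule infsum_reindex[symmetric]) simp
  also have "range uminus = (UNIV :: int set)"
    by (metis surj_def minus_minus)
  finally show ?thesis by (simp add: f_pa_eq_infsum_summand)
qed

lemma f_pa_periodic: "f_pa p \<alpha> (\<theta> + 2 * of_int k * pi) = f_pa p \<alpha> \<theta>"
proof -
  have "f_pa_summand p \<alpha> (\<theta> + 2 * of_int k * pi) = f_pa_summand p \<alpha> \<theta> \<circ> (\<lambda>l. l + k)"
  proof
    fix l :: int
    have "(\<theta> + 2 * of_int k * pi) / 2 + of_int l * pi = \<theta> / 2 + of_int (l + k) * pi"
      and "\<theta> + 2 * of_int k * pi + 2 * of_int l * pi = \<theta> + 2 * of_int (l + k) * pi"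
      by (simp_all add: algebra_simps)
    then show "f_pa_summand p \<alpha> (\<theta> + 2 * of_int k * pi) l = (f_pa_summand p \<alpha> \<theta> \<circ> (\<lambda>l. l + k)) l"
      unfolding f_pa_summand_def o_def by (simp only:)
  qed
  then have "f_pa p \<alpha> (\<theta> + 2 * of_int k * pi) = infsum (f_pa_summand p \<alpha> \<theta> \<circ> (\<lambda>l. l + k)) UNIV"
    by (simp only: f_pa_eq_infsum_summand)
  also have "\<dots> = infsum (f_pa_summand p \<alpha> \<theta>) (range (\<lambda>l. l + k))"
    by (rule infsum_reindex[symmetric]) simp
  also have "range (\<lambda>l. l + k) = (UNIV :: int set)"
    by (metis surj_def diff_add_cancel)
  finally show ?thesis by (simp add: f_pa_eq_infsum_summand)
qed

lemma f_pa_reduce_0_pi: "\<exists>\<theta>'\<in>{0..pi}. f_pa p \<alpha> \<theta> = f_pa p \<alpha> \<theta>'"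
proof -
  define k where "k = \<lfloor>\<theta> / (2 * pi)\<rfloor>"
  define r where "r = \<theta> - 2 * of_int k * pi"
  have "of_int k * (2 * pi) \<le> \<theta>" "\<theta> < (of_int k + 1) * (2 * pi)"
    unfolding k_def by (simp_all add: floor_divide_lower floor_divide_upper)
  then have r: "0 \<le> r" "r < 2 * pi"
    unfolding r_def by (auto simp: algebra_simps)
  have f_r: "f_pa p \<alpha> \<theta> = f_pa p \<alpha> r"
    using f_pa_periodic[of p \<alpha> r k] unfolding r_def by simp
  show ?thesis
  proof (cases "r \<le> pi")
    case True
    then show ?thesis using f_r r by auto
  next
    case False
    have "f_pa p \<alpha> r = f_pa p \<alpha> (- (2 * pi - r) + 2 * of_int 1 * pi)" by simp
    also have "\<dots> = f_pa p \<alpha> (2 * pi - r)" by (simp only: f_pa_periodic f_pa_minus)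
    finally show ?thesis using f_r r False by (intro bexI[of _ "2 * pi - r"]) auto
  qed
qed

lemma f_pa_summand_eq:
  assumes "\<theta> + 2 * of_int l * pi \<noteq> 0"
  shows "f_pa_summand p \<alpha> \<theta> l
      = (2 * sin (\<theta> / 2 + of_int l * pi) * sgn (\<theta> + 2 * of_int l * pi))^(p + 1)
        * \<bar>\<theta> + 2 * of_int l * pi\<bar> powr (\<alpha> - real (p + 1))"
proof -
  define y where "y = \<theta> + 2 * of_int l * pi"
  have half: "\<theta> / 2 + of_int l * pi = y / 2" unfolding y_def by simp
  have "y \<noteq> 0" using assms y_def by simp
  then have "sinc_fn (y / 2) = 2 * sin (y / 2) / y" unfolding sinc_fn_def by auto
  then have "f_pa_summand p \<alpha> \<theta> l = \<bar>y\<bar> powr \<alpha> * (2 * sin (y / 2) / y)^(p + 1)"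
    unfolding f_pa_summand_def half y_def by simp
  also have "\<dots> = (2 * sin (y / 2) * sgn y)^(p + 1) * \<bar>y\<bar> powr (\<alpha> - real (p + 1))"
    using \<open>y \<noteq> 0\<close> by (rule abs_powr_mult_divide_power)
  finally show ?thesis unfolding half y_def[symmetric] .
qed

lemma f_pa_summand_nat:
  assumes "0 < \<theta> + 2 * real n * pi"
  shows "f_pa_summand p \<alpha> \<theta> (int n)
      = ((-1)^n * (2 * sin (\<theta> / 2)))^(p + 1) * (\<theta> + 2 * real n * pi) powr (\<alpha> - real (p + 1))"
proof -
  have "sin (\<theta> / 2 + real n * pi) = (-1)^n * sin (\<theta> / 2)" by (simp add: sin_add)
  then show ?thesis
    using assms f_pa_summand_eq[of \<theta> "int n" p \<alpha>] by (simp add: mult_ac)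
qed

lemma f_pa_summand_neg:
  assumes "\<theta> < 2 * real (Suc n) * pi"
  shows "f_pa_summand p \<alpha> \<theta> (- int n - 1)
      = ((-1)^n * (2 * sin (\<theta> / 2)))^(p + 1) * (2 * real (Suc n) * pi - \<theta>) powr (\<alpha> - real (p + 1))"
proof -
  have "\<theta> + 2 * of_int (- int n - 1) * pi = \<theta> - 2 * real (Suc n) * pi"
    and "\<theta> / 2 + of_int (- int n - 1) * pi = \<theta> / 2 - real (Suc n) * pi"
    by (simp_all add: algebra_simps)
  moreover have "sin (\<theta> / 2 - real (Suc n) * pi) = - ((-1)^n * sin (\<theta> / 2))"
    by (simp only: sin_diff sin_npi cos_npi) simp
  ultimately show ?thesis
    using assms f_pa_summand_eq[of \<theta> "- int n - 1" p \<alpha>] by (simp add: mult_ac)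
qed

context
  fixes p :: nat and \<alpha> :: real
  assumes \<alpha>_pos: "0 < \<alpha>" and \<alpha>_less: "\<alpha> < real p"
begin

abbreviation "\<beta> \<equiv> \<alpha> - real (p + 1)"

lemma powr_\<beta>_antimono: "0 < m \<Longrightarrow> m \<le> m' \<Longrightarrow> real m' powr \<beta> \<le> real m powr \<beta>"
  using \<alpha>_less by (intro powr_mono2') auto

lemma summable_powr_\<beta>: "summable (\<lambda>m. real m powr \<beta>)"
  using \<alpha>_less summable_real_powr_iff by simp

lemma summable_Suc_powr_\<beta>: "summable (\<lambda>n. real (Suc n) powr \<beta>)"
  using summable_powr_\<beta> summable_Suc_iff[of "\<lambda>m. real m powr \<beta>"] by simp

lemma summable_powr_\<beta>_reindex:
  "\<bar>\<sigma>\<bar> \<le> 1 \<Longrightarrow> 1 \<le> c \<Longrightarrow> 1 \<le> d \<Longrightarrow> summable (\<lambda>n. \<sigma>^n * real (c*n + d) powr \<beta>)"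
  by (rule summable_power_mult_reindex[OF summable_powr_\<beta> _ powr_\<beta>_antimono]) auto

lemma abs_f_pa_summand_le:
  assumes "0 \<le> \<theta>" "\<theta> \<le> pi"
  shows "\<bar>f_pa_summand p \<alpha> \<theta> (int (Suc n))\<bar> \<le> (2 * sin (\<theta> / 2))^(p + 1) * real (Suc n) powr \<beta>"
    and "\<bar>f_pa_summand p \<alpha> \<theta> (- int n - 1)\<bar> \<le> (2 * sin (\<theta> / 2))^(p + 1) * real (Suc n) powr \<beta>"
proof -
  have sin: "0 \<le> sin (\<theta> / 2)" using assms by (intro sin_ge_zero) auto
  have dist: "real (Suc n) \<le> 2 * real (Suc n) * pi - \<theta>"
    using assms by (rule real_Suc_le_2_Suc_pi_minus)
  have "\<bar>f_pa_summand p \<alpha> \<theta> (int (Suc n))\<bar>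
      = (2 * sin (\<theta> / 2))^(p + 1) * (\<theta> + 2 * real (Suc n) * pi) powr \<beta>"
    using dist assms sin by (subst f_pa_summand_nat) (auto simp: abs_mult power_abs)
  also have "\<dots> \<le> (2 * sin (\<theta> / 2))^(p + 1) * real (Suc n) powr \<beta>"
    using dist assms sin \<alpha>_less by (intro mult_left_mono powr_mono2') auto
  finally show "\<bar>f_pa_summand p \<alpha> \<theta> (int (Suc n))\<bar> \<le> (2 * sin (\<theta> / 2))^(p + 1) * real (Suc n) powr \<beta>" .
  have "\<bar>f_pa_summand p \<alpha> \<theta> (- int n - 1)\<bar>
      = (2 * sin (\<theta> / 2))^(p + 1) * (2 * real (Suc n) * pi - \<theta>) powr \<beta>"
    using dist sin by (subst f_pa_summand_neg) (auto simp: abs_mult power_abs)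
  also have "\<dots> \<le> (2 * sin (\<theta> / 2))^(p + 1) * real (Suc n) powr \<beta>"
    using dist sin \<alpha>_less by (intro mult_left_mono powr_mono2') auto
  finally show "\<bar>f_pa_summand p \<alpha> \<theta> (- int n - 1)\<bar> \<le> (2 * sin (\<theta> / 2))^(p + 1) * real (Suc n) powr \<beta>" .
qed

lemma summable_abs_f_pa_summand:
  assumes "0 \<le> \<theta>" "\<theta> \<le> pi"
  shows "summable (\<lambda>n. \<bar>f_pa_summand p \<alpha> \<theta> (int (Suc n))\<bar>)"
    and "summable (\<lambda>n. \<bar>f_pa_summand p \<alpha> \<theta> (int n)\<bar>)"
    and "summable (\<lambda>n. \<bar>f_pa_summand p \<alpha> \<theta> (- int n - 1)\<bar>)"
proof -
  have bound: "summable (\<lambda>n. (2 * sin (\<theta> / 2))^(p + 1) * real (Suc n) powr \<beta>)"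
    using summable_Suc_powr_\<beta> by (rule summable_mult)
  show "summable (\<lambda>n. \<bar>f_pa_summand p \<alpha> \<theta> (int (Suc n))\<bar>)"
    by (rule summable_comparison_test[OF _ bound]) (use abs_f_pa_summand_le[OF assms] in simp)
  then show "summable (\<lambda>n. \<bar>f_pa_summand p \<alpha> \<theta> (int n)\<bar>)"
    by (subst summable_Suc_iff[symmetric]) simp
  show "summable (\<lambda>n. \<bar>f_pa_summand p \<alpha> \<theta> (- int n - 1)\<bar>)"
    by (rule summable_comparison_test[OF _ bound]) (use abs_f_pa_summand_le[OF assms] in simp)
qed

lemma f_pa_eq_suminf_nat_neg:
  assumes "0 \<le> \<theta>" "\<theta> \<le> pi"
  shows "f_pa p \<alpha> \<theta> = (\<Sum>n. f_pa_summand p \<alpha> \<theta> (int n)) + (\<Sum>n. f_pa_summand p \<alpha> \<theta> (- int n - 1))"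
  unfolding f_pa_eq_infsum_summand
  by (rule infsum_int_split) (use summable_abs_f_pa_summand[OF assms] in simp_all)

lemma f_pa_eq_main_term_plus_tails:
  assumes "0 \<le> \<theta>" "\<theta> \<le> pi"
  shows "f_pa p \<alpha> \<theta> = \<bar>\<theta>\<bar> powr \<alpha> * sinc_fn (\<theta> / 2) ^ (p + 1)
      + (\<Sum>n. f_pa_summand p \<alpha> \<theta> (int (Suc n))) + (\<Sum>n. f_pa_summand p \<alpha> \<theta> (- int n - 1))"
proof -
  have "summable (\<lambda>n. f_pa_summand p \<alpha> \<theta> (int n))"
    using summable_abs_f_pa_summand(2)[OF assms] by (rule summable_rabs_cancel)
  then have "(\<Sum>n. f_pa_summand p \<alpha> \<theta> (int n))
      = (\<Sum>n. f_pa_summand p \<alpha> \<theta> (int (Suc n))) + f_pa_summand p \<alpha> \<theta> 0"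
    by (subst suminf_split_initial_segment[of _ 1]) simp_all
  moreover have "f_pa_summand p \<alpha> \<theta> 0 = \<bar>\<theta>\<bar> powr \<alpha> * sinc_fn (\<theta> / 2) ^ (p + 1)"
    unfolding f_pa_summand_def by simp
  ultimately show ?thesis using f_pa_eq_suminf_nat_neg[OF assms] by simp
qed

lemma f_pa_upper:
  assumes "0 \<le> \<theta>" "\<theta> \<le> pi"
  shows "f_pa p \<alpha> \<theta> \<le> \<bar>\<theta>\<bar> powr \<alpha> * sinc_fn (\<theta> / 2) ^ (p + 1)
      + (2^(p + 2) * (\<Sum>n. real (Suc n) powr \<beta>)) * sin (\<theta> / 2) ^ (p + 1)"
proof -
  define K where "K = (2 * sin (\<theta> / 2))^(p + 1)"
  define Z where "Z = (\<Sum>n. real (Suc n) powr \<beta>)"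
  have bound: "(\<lambda>n. K * real (Suc n) powr \<beta>) sums (K * Z)"
    unfolding Z_def using summable_Suc_powr_\<beta> by (intro sums_mult summable_sums)
  have "(\<Sum>n. f_pa_summand p \<alpha> \<theta> (int (Suc n))) \<le> K * Z"
  proof (rule sums_le[OF _ summable_sums bound])
    show "summable (\<lambda>n. f_pa_summand p \<alpha> \<theta> (int (Suc n)))"
      using summable_abs_f_pa_summand(1)[OF assms] by (rule summable_rabs_cancel)
    show "f_pa_summand p \<alpha> \<theta> (int (Suc n)) \<le> K * real (Suc n) powr \<beta>" for n
      using abs_f_pa_summand_le(1)[OF assms, of n] unfolding K_def by linarith
  qed
  moreover have "(\<Sum>n. f_pa_summand p \<alpha> \<theta> (- int n - 1)) \<le> K * Z"
  proof (rule sums_le[OF _ summable_sums bound])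
    show "summable (\<lambda>n. f_pa_summand p \<alpha> \<theta> (- int n - 1))"
      using summable_abs_f_pa_summand(3)[OF assms] by (rule summable_rabs_cancel)
    show "f_pa_summand p \<alpha> \<theta> (- int n - 1) \<le> K * real (Suc n) powr \<beta>" for n
      using abs_f_pa_summand_le(2)[OF assms, of n] unfolding K_def by linarith
  qed
  moreover have "K * Z + K * Z = (2^(p + 2) * Z) * sin (\<theta> / 2) ^ (p + 1)"
    unfolding K_def by (simp add: power_mult_distrib)
  ultimately show ?thesis
    using f_pa_eq_main_term_plus_tails[OF assms] unfolding Z_def by linarith
qed

lemma f_pa_lower:
  assumes "0 \<le> \<theta>" "\<theta> \<le> pi"
  shows "\<bar>\<theta>\<bar> powr \<alpha> * sinc_fn (\<theta> / 2) ^ (p + 1) \<le> f_pa p \<alpha> \<theta>"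
proof -
  have nat: "summable (\<lambda>n. f_pa_summand p \<alpha> \<theta> (int (Suc n)))"
    using summable_abs_f_pa_summand(1)[OF assms] by (rule summable_rabs_cancel)
  have neg: "summable (\<lambda>n. f_pa_summand p \<alpha> \<theta> (- int n - 1))"
    using summable_abs_f_pa_summand(3)[OF assms] by (rule summable_rabs_cancel)
  have "0 \<le> (\<Sum>n. f_pa_summand p \<alpha> \<theta> (int (Suc n))) + (\<Sum>n. f_pa_summand p \<alpha> \<theta> (- int n - 1))"
  proof (cases "even p")
    case False
    then have "0 \<le> f_pa_summand p \<alpha> \<theta> l" for l
      unfolding f_pa_summand_def by (intro mult_nonneg_nonneg zero_le_even_power) auto
    then show ?thesis using suminf_nonneg[OF nat] suminf_nonneg[OF neg] by simp
  next
    case True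
    \<comment> \<open>For even \<open>p\<close> the summands at \<open>n + 1\<close> and \<open>- n - 1\<close> pair up into an alternating series.\<close>
    define K where "K = (2 * sin (\<theta> / 2))^(p + 1)"
    define g where "g n = (2 * real (Suc n) * pi - \<theta>) powr \<beta> - (2 * real (Suc n) * pi + \<theta>) powr \<beta>" for n
    have pair: "f_pa_summand p \<alpha> \<theta> (int (Suc n)) + f_pa_summand p \<alpha> \<theta> (- int n - 1) = (-1)^n * (K * g n)" for n
    proof -
      have "real (Suc n) \<le> 2 * real (Suc n) * pi - \<theta>" "0 < real (Suc n)"
        using assms by (rule real_Suc_le_2_Suc_pi_minus) simp
      then have nat: "0 < \<theta> + 2 * real (Suc n) * pi" and neg: "\<theta> < 2 * real (Suc n) * pi"
        using assms by linarith+
      have "(-1::real)^(p + 1) = -1" using True by simp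
      then show ?thesis
        unfolding f_pa_summand_nat[OF nat] f_pa_summand_neg[OF neg] power_neg_one_power_mult K_def g_def
        by (simp add: algebra_simps)
    qed
    have "0 \<le> (\<Sum>n. (-1)^n * (K * g n))"
    proof (rule alternating_suminf_nonneg)
      show "summable (\<lambda>n. (-1)^n * (K * g n))"
        using summable_add[OF nat neg] by (simp only: pair)
      have "g (Suc n) \<le> g n" for n
      proof -
        have "real (Suc n) \<le> 2 * real (Suc n) * pi - \<theta>" "0 < real (Suc n)"
          using assms by (rule real_Suc_le_2_Suc_pi_minus) simp
        then show ?thesis
          unfolding g_def using assms \<alpha>_less by (intro powr_diff_antimono) auto
      qed
      moreover have "0 \<le> K"
        unfolding K_def using assms by (intro zero_le_power mult_nonneg_nonneg sin_ge_zero) auto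
      ultimately show "K * g (Suc n) \<le> K * g n" for n
        by (simp add: mult_left_mono)
    qed
    then show ?thesis
      by (simp only: suminf_add[OF nat neg] pair)
  qed
  then show ?thesis
    using f_pa_eq_main_term_plus_tails[OF assms] by linarith
qed

lemma f_pa_bdd_above: "bdd_above (range (f_pa p \<alpha>))"
proof -
  define C where "C = 2^(p + 2) * (\<Sum>n. real (Suc n) powr \<beta>)"
  have bound: "f_pa p \<alpha> \<theta> \<le> pi powr \<alpha> + \<bar>C\<bar>" if "\<theta> \<in> {0..pi}" for \<theta>
  proof -
    have "\<bar>sinc_fn (\<theta> / 2)\<bar> ^ (p + 1) \<le> 1"
      by (intro power_le_one abs_ge_zero abs_sinc_fn_le_1)
    then have "\<bar>sinc_fn (\<theta> / 2) ^ (p + 1)\<bar> \<le> 1"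
      by (simp only: power_abs)
    then have "\<bar>\<theta>\<bar> powr \<alpha> * sinc_fn (\<theta> / 2) ^ (p + 1) \<le> \<bar>\<theta>\<bar> powr \<alpha> * 1"
      by (intro mult_left_mono) auto
    also have "\<dots> \<le> pi powr \<alpha>"
      using that \<alpha>_pos by (auto intro: powr_mono2)
    finally have "\<bar>\<theta>\<bar> powr \<alpha> * sinc_fn (\<theta> / 2) ^ (p + 1) \<le> pi powr \<alpha>" .
    moreover have "C * sin (\<theta> / 2) ^ (p + 1) \<le> \<bar>C\<bar> * \<bar>sin (\<theta> / 2)\<bar> ^ (p + 1)"
      by (simp only: power_abs[symmetric] abs_mult[symmetric] abs_ge_self)
    moreover have "\<bar>C\<bar> * \<bar>sin (\<theta> / 2)\<bar> ^ (p + 1) \<le> \<bar>C\<bar>"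
      by (intro mult_left_le power_le_one abs_ge_zero abs_sin_le_one)
    ultimately show ?thesis
      using f_pa_upper[of \<theta>] that unfolding C_def by auto
  qed
  have "f_pa p \<alpha> \<theta> \<le> pi powr \<alpha> + \<bar>C\<bar>" for \<theta>
    using f_pa_reduce_0_pi[of p \<alpha> \<theta>] bound by auto
  then show ?thesis
    by (rule bdd_aboveI2)
qed

lemma f_pa_pi:
  "f_pa p \<alpha> pi = 2^(p + 2) * pi powr \<beta> * (\<Sum>n. ((-1)^(p + 1))^n * real (2*n + 1) powr \<beta>)"
proof -
  define c where "c = 2^(p + 1) * pi powr \<beta>"
  have "f_pa_summand p \<alpha> pi (int n) = c * (((-1)^(p + 1))^n * real (2*n + 1) powr \<beta>)" for n
  proof -
    have pos: "0 < pi + 2 * real n * pi" by (simp add: add_pos_nonneg)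
    have eq: "pi + 2 * real n * pi = pi * real (2*n + 1)" by (simp add: algebra_simps)
    show ?thesis
      unfolding f_pa_summand_nat[OF pos] eq powr_mult power_neg_one_power_mult c_def by simp
  qed
  moreover have "f_pa_summand p \<alpha> pi (- int n - 1) = c * (((-1)^(p + 1))^n * real (2*n + 1) powr \<beta>)" for n
  proof -
    have pos: "pi < 2 * real (Suc n) * pi" by simp
    have eq: "2 * real (Suc n) * pi - pi = pi * real (2*n + 1)" by (simp add: algebra_simps)
    show ?thesis
      unfolding f_pa_summand_neg[OF pos] eq powr_mult power_neg_one_power_mult c_def by simp
  qed
  moreover have "summable (\<lambda>n. ((-1)^(p + 1))^n * real (2*n + 1) powr \<beta>)"
    by (rule summable_powr_\<beta>_reindex) (simp_all add: power_abs)
  ultimately show ?thesis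
    using f_pa_eq_suminf_nat_neg[of pi] by (simp add: suminf_mult c_def)
qed

lemma f_pa_pi_half:
  "f_pa p \<alpha> (pi / 2) = sqrt 2^(p + 1) * (pi / 2) powr \<beta>
     * (\<Sum>n. ((-1)^(p + 1))^n * (real (4*n + 1) powr \<beta> + real (4*n + 3) powr \<beta>))"
proof -
  define c where "c = sqrt 2^(p + 1) * (pi / 2) powr \<beta>"
  have sin: "2 * sin (pi / 2 / 2) = sqrt 2" using sin_45 by simp
  have nat: "f_pa_summand p \<alpha> (pi / 2) (int n) = c * (((-1)^(p + 1))^n * real (4*n + 1) powr \<beta>)" for n
  proof -
    have pos: "0 < pi / 2 + 2 * real n * pi" by (simp add: add_pos_nonneg)
    have eq: "pi / 2 + 2 * real n * pi = pi / 2 * real (4*n + 1)" by (simp add: algebra_simps)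
    show ?thesis
      unfolding f_pa_summand_nat[OF pos] eq powr_mult power_neg_one_power_mult c_def sin by simp
  qed
  have neg: "f_pa_summand p \<alpha> (pi / 2) (- int n - 1) = c * (((-1)^(p + 1))^n * real (4*n + 3) powr \<beta>)" for n
  proof -
    have pos: "pi / 2 < 2 * real (Suc n) * pi" by (simp add: add_pos_nonneg)
    have eq: "2 * real (Suc n) * pi - pi / 2 = pi / 2 * real (4*n + 3)" by (simp add: algebra_simps)
    show ?thesis
      unfolding f_pa_summand_neg[OF pos] eq powr_mult power_neg_one_power_mult c_def sin by simp
  qed
  have summable_sub: "summable (\<lambda>n. ((-1)^(p + 1))^n * real (4*n + d) powr \<beta>)" if "1 \<le> d" for d
    using that by (intro summable_powr_\<beta>_reindex) (simp_all add: power_abs)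
  show ?thesis
    using f_pa_eq_suminf_nat_neg[of "pi / 2"] summable_sub[of 1] summable_sub[of 3]
    by (simp add: nat neg suminf_mult suminf_add[symmetric] distrib_left c_def)
qed

lemma f_pa_pi_over_pi_half:
  shows "0 < f_pa p \<alpha> (pi / 2)" and "0 \<le> f_pa p \<alpha> pi"
    and "f_pa p \<alpha> pi / f_pa p \<alpha> (pi / 2) \<le> 2 powr ((2 * \<alpha> + 1 - real p) / 2)"
proof -
  define S1 where "S1 = (\<Sum>n. ((-1)^(p + 1))^n * real (2*n + 1) powr \<beta>)"
  define S2 where "S2 = (\<Sum>n. ((-1)^(p + 1))^n * (real (4*n + 1) powr \<beta> + real (4*n + 3) powr \<beta>))"
  define c where "c = sqrt 2^(p + 1) * (pi / 2) powr \<beta>"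
  define E where "E = (2::real) powr ((2 * \<alpha> + 1 - real p) / 2)"
  have \<sigma>: "(-1::real)^(p + 1) = 1 \<or> (-1::real)^(p + 1) = -1"
    by (cases "even p") auto
  have "0 < real m powr \<beta>" if "0 < m" for m
    using that by simp
  moreover have "real m' powr \<beta> < real m powr \<beta>" if "0 < m" "m < m'" for m m'
    using that \<alpha>_less by (intro powr_less_mono2_neg) auto
  ultimately have S: "0 < S1" "S1 \<le> S2"
    using signed_odd_series_le[OF \<sigma> summable_powr_\<beta>] unfolding S1_def S2_def by blast+
  have c: "0 < c" and E: "0 < E"
    unfolding c_def E_def by simp_all
  have f_pi: "f_pa p \<alpha> pi = E * c * S1" and f_pi_half: "f_pa p \<alpha> (pi / 2) = c * S2"
    unfolding S1_def S2_def c_def E_def f_pa_pi f_pa_pi_half two_power_pi_powr_eq by simp_all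
  show "0 < f_pa p \<alpha> (pi / 2)" and "0 \<le> f_pa p \<alpha> pi"
    unfolding f_pi f_pi_half using S c E by simp_all
  have "f_pa p \<alpha> pi / f_pa p \<alpha> (pi / 2) = E * (S1 / S2)"
    unfolding f_pi f_pi_half using c by simp
  also have "\<dots> \<le> E"
    using S E by (intro mult_left_le) simp_all
  finally show "f_pa p \<alpha> pi / f_pa p \<alpha> (pi / 2) \<le> 2 powr ((2 * \<alpha> + 1 - real p) / 2)"
    unfolding E_def .
qed

end

theorem theorem5p2:
  fixes \<alpha> :: real and p :: nat
  assumes "1 < \<alpha>" and "\<alpha> < 2" and "2 \<le> p"
  shows "(\<forall>\<theta>. f_pa p \<alpha> \<theta> = f_pa p \<alpha> (- \<theta>))
    \<and> (\<exists>C. \<forall>\<theta>\<in>{0..pi}.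
          \<bar>\<theta>\<bar> powr \<alpha> * sinc_fn (\<theta> / 2) ^ (p + 1) \<le> f_pa p \<alpha> \<theta>
        \<and> f_pa p \<alpha> \<theta> \<le> \<bar>\<theta>\<bar> powr \<alpha> * sinc_fn (\<theta> / 2) ^ (p + 1)
                          + C * (sin (\<theta> / 2)) ^ (p + 1))
    \<and> f_pa p \<alpha> pi / (SUP \<theta>. f_pa p \<alpha> \<theta>) \<le> f_pa p \<alpha> pi / f_pa p \<alpha> (pi / 2)
    \<and> f_pa p \<alpha> pi / f_pa p \<alpha> (pi / 2) \<le> 2 powr ((2 * \<alpha> + 1 - real p) / 2)"
proof -
  have \<alpha>: "0 < \<alpha>" "\<alpha> < real p" using assms by simp_all
  note ratio = f_pa_pi_over_pi_half[OF \<alpha>]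
  have "f_pa p \<alpha> (pi / 2) \<le> (SUP \<theta>. f_pa p \<alpha> \<theta>)"
    by (rule cSUP_upper[OF UNIV_I f_pa_bdd_above[OF \<alpha>]])
  then have "f_pa p \<alpha> pi / (SUP \<theta>. f_pa p \<alpha> \<theta>) \<le> f_pa p \<alpha> pi / f_pa p \<alpha> (pi / 2)"
    using ratio(1,2) by (intro divide_left_mono) auto
  moreover have "\<exists>C. \<forall>\<theta>\<in>{0..pi}.
          \<bar>\<theta>\<bar> powr \<alpha> * sinc_fn (\<theta> / 2) ^ (p + 1) \<le> f_pa p \<alpha> \<theta>
        \<and> f_pa p \<alpha> \<theta> \<le> \<bar>\<theta>\<bar> powr \<alpha> * sinc_fn (\<theta> / 2) ^ (p + 1)
                          + C * (sin (\<theta> / 2)) ^ (p + 1)"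
    using f_pa_lower[OF \<alpha>] f_pa_upper[OF \<alpha>] by fastforce
  ultimately show ?thesis
    using ratio(3) f_pa_minus by simp
qed

end
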